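(* Let $(G,P)$ be an instance of Edge Disjoint Paths in which every vertex occurs in at most one pair of $P$. Let $X\subseteq E(G)$ be a feedback edge set of $G$ and let $Y$ be the set of vertices incident to at least one edge of $X$. Let $L$ be a connected component of $G-Y$ such that there is exactly one edge $\{\ell,y\}$ of $G$ with $\ell\in V(L)$ and $y\in Y$. Then: (a) if $L$ contains no unmatched terminal and $(L,P_L)$ is a YES-instance of EDP, then $(G,P)$ is a YES-instance if and only if $(G-V(L),\,P\setminus P_L)$ is a YES-instance; (b) if $L$ contains exactly one unmatched terminal $s$ (with $\{s,t\}\in P$, $t\notin V(L)$) and $(L,P_L\cup\{\{s,\ell\}\})$ is a YES-instance of EDP (where the pair $\{s,\ell\}$ is omitted if $s=\ell$), then $(G,P)$ is a YES-instance if and only if $(G',P\setminus P_L)$ is a YES-instance, where $G'$ is obtained from $G-V(L)$ by adding the vertex $s$ and the edge $\{y,s\}$; (c) in all other cases (i.e., $L$ contains at least two unmatched terminals, or $L$ contains no unmatched terminal and $(L,P_L)$ is a NO-instance, or $L$ contains exactly one unmatched terminal $s$ and $(L,P_L\cup\{\{s,\ell\}\})$ is a NO-instance), $(G,P)$ is a NO-instance.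
   Context: Edge Disjoint Paths (EDP): given an undirected graph $G$ and a set $P$ of terminal pairs (2-element subsets of $V(G)$), decide whether there exist pairwise edge-disjoint paths in $G$, one for each pair $\{s,t\}\in P$, connecting $s$ and $t$. A feedback edge set of $G$ is a set $X\subseteq E(G)$ such that $G-X$ is a forest. For a subgraph $H$ of $G$, $P_H\subseteq P$ is the set of pairs with both endpoints in $V(H)$, and $H$ contains an unmatched terminal $s$ if $\{s,t\}\in P$ with $s\in V(H)$ and $t\notin V(H)$. *)

theory Defs
  imports Main
begin

definition graph :: "'a set \<Rightarrow> 'a set set \<Rightarrow> bool" where
  "graph V E \<longleftrightarrow> finite V \<and> (\<forall>e\<in>E. \<exists>u v. u \<noteq> v \<and> u \<in> V \<and> v \<in> V \<and> e = {u, v})"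

definition pairs_ok :: "'a set \<Rightarrow> 'a set set \<Rightarrow> bool" where
  "pairs_ok V P \<longleftrightarrow> (\<forall>p\<in>P. \<exists>u v. u \<noteq> v \<and> u \<in> V \<and> v \<in> V \<and> p = {u, v})"

definition is_path :: "'a set \<Rightarrow> 'a set set \<Rightarrow> 'a list \<Rightarrow> bool" where
  "is_path V E xs \<longleftrightarrow> xs \<noteq> [] \<and> distinct xs \<and> set xs \<subseteq> V \<and>
     (\<forall>i. Suc i < length xs \<longrightarrow> {xs ! i, xs ! Suc i} \<in> E)"

definition path_edges :: "'a list \<Rightarrow> 'a set set" where
  "path_edges xs = {{xs ! i, xs ! Suc i} | i. Suc i < length xs}"

definition edp :: "'a set \<Rightarrow> 'a set set \<Rightarrow> 'a set set \<Rightarrow> bool" where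
  "edp V E P \<longleftrightarrow> (\<exists>f :: 'a set \<Rightarrow> 'a list.
      (\<forall>p\<in>P. is_path V E (f p) \<and> {hd (f p), last (f p)} = p) \<and>
      (\<forall>p\<in>P. \<forall>q\<in>P. p \<noteq> q \<longrightarrow> path_edges (f p) \<inter> path_edges (f q) = {}))"

definition forest :: "'a set \<Rightarrow> 'a set set \<Rightarrow> bool" where
  "forest V E \<longleftrightarrow> \<not> (\<exists>cs. 3 \<le> length cs \<and> is_path V E cs \<and> {last cs, hd cs} \<in> E)"

definition feedback_edge_set :: "'a set \<Rightarrow> 'a set set \<Rightarrow> 'a set set \<Rightarrow> bool" where
  "feedback_edge_set V E X \<longleftrightarrow> X \<subseteq> E \<and> forest V (E - X)"

definition induced_edges :: "'a set set \<Rightarrow> 'a set \<Rightarrow> 'a set set" where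
  "induced_edges E S = {e \<in> E. e \<subseteq> S}"

definition is_component :: "'a set \<Rightarrow> 'a set set \<Rightarrow> 'a set \<Rightarrow> bool" where
  "is_component V E C \<longleftrightarrow>
     (\<exists>c\<in>V. C = {v. \<exists>xs. is_path V E xs \<and> hd xs = c \<and> last xs = v})"

definition inner_pairs :: "'a set set \<Rightarrow> 'a set \<Rightarrow> 'a set set" where
  "inner_pairs P S = {p \<in> P. p \<subseteq> S}"

definition unmatched :: "'a set set \<Rightarrow> 'a set \<Rightarrow> 'a set" where
  "unmatched P S = {s \<in> S. \<exists>t. {s, t} \<in> P \<and> t \<notin> S}"

end

theory Submission
  imports Defs
begin

(*
  The edge {l, y} is a bridge cutting C off from the rest of G: an edge from C to a vertex
  outside Y would lie in G - Y and hence inside the component C, and by assumption {l, y} is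
  the only edge from C to Y.  Consequently a simple path with both ends on one side of the
  bridge stays on that side, and a path joining C to its complement runs through {l, y}.
  So no two pairs of P can cross the bridge edge-disjointly, and a solution of (G, P) cuts
  into a solution inside C (the crossing path, if any, truncated at l) and a solution outside
  C (the crossing path truncated at y and prefixed by the pendant edge {y, s}); conversely,
  such solutions glue back together along the bridge.
*)

lemma path_edges_conv_zip: "path_edges xs = (\<lambda>(a, b). {a, b}) ` set (zip xs (tl xs))"
  unfolding path_edges_def set_zip by (force simp: nth_tl)

lemma path_edges_Nil [simp]: "path_edges [] = {}"
  and path_edges_singleton [simp]: "path_edges [x] = {}"
  and path_edges_Cons_Cons [simp]: "path_edges (x # y # zs) = insert {x, y} (path_edges (y # zs))"
  by (simp_all add: path_edges_conv_zip)

lemma path_edges_Cons: "zs \<noteq> [] \<Longrightarrow> path_edges (x # zs) = insert {x, hd zs} (path_edges zs)"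
  by (cases zs) auto

lemma path_edges_append:
  "ys \<noteq> [] \<Longrightarrow> zs \<noteq> [] \<Longrightarrow>
    path_edges (ys @ zs) = insert {last ys, hd zs} (path_edges ys \<union> path_edges zs)"
  by (induction ys rule: induct_list012) (auto simp: neq_Nil_conv)

lemma path_edges_rev [simp]: "path_edges (rev xs) = path_edges xs"
proof (induction xs)
  case (Cons x xs)
  then show ?case
    by (cases "xs = []") (auto simp: path_edges_append path_edges_Cons last_rev insert_commute)
qed simp

lemma path_edge_subset: "e \<in> path_edges xs \<Longrightarrow> e \<subseteq> set xs"
  unfolding path_edges_def by auto

lemma is_path_iff:
  "is_path V E xs \<longleftrightarrow> xs \<noteq> [] \<and> distinct xs \<and> set xs \<subseteq> V \<and> path_edges xs \<subseteq> E"
  unfolding is_path_def path_edges_def by blast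

lemma is_path_mono: "is_path V E xs \<Longrightarrow> V \<subseteq> V' \<Longrightarrow> E \<subseteq> E' \<Longrightarrow> is_path V' E' xs"
  by (auto simp: is_path_iff)

lemma is_path_rev: "is_path V E xs \<Longrightarrow> is_path V E (rev xs)"
  by (simp add: is_path_iff)

lemma is_path_append:
  assumes "ys \<noteq> []" "zs \<noteq> []"
  shows "is_path V E (ys @ zs) \<longleftrightarrow>
    is_path V E ys \<and> is_path V E zs \<and> set ys \<inter> set zs = {} \<and> {last ys, hd zs} \<in> E"
  using assms by (auto simp: is_path_iff path_edges_append)

lemma is_path_induced: "is_path V E xs \<Longrightarrow> set xs \<subseteq> A \<Longrightarrow> is_path A (induced_edges E A) xs"
  unfolding is_path_iff induced_edges_def using path_edge_subset by fastforce

lemma induced_edges_subset: "induced_edges E A \<subseteq> E"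
  by (auto simp: induced_edges_def)

lemma path_edges_induced: "is_path V (induced_edges E A) xs \<Longrightarrow> path_edges xs \<subseteq> induced_edges E A"
  by (simp add: is_path_iff)

lemma obtain_oriented_path:
  assumes "is_path V E xs" "{hd xs, last xs} = {u, v}"
  obtains xs' where "is_path V E xs'" "hd xs' = u" "last xs' = v" "path_edges xs' = path_edges xs"
proof (cases "hd xs = u")
  case True
  with assms show ?thesis
    using that[of xs] by (auto simp: doubleton_eq_iff)
next
  case False
  with assms have "hd (rev xs) = u" "last (rev xs) = v"
    by (auto simp: doubleton_eq_iff hd_rev last_rev)
  with assms show ?thesis
    using that[of "rev xs"] is_path_rev by auto
qed

lemma path_never_enters:
  assumes "hd xs \<notin> A" "\<forall>e\<in>path_edges xs. e \<subseteq> A \<or> e \<inter> A = {}"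
  shows "set xs \<inter> A = {}"
  using assms by (induction xs rule: induct_list012) auto

lemma path_split_at_cut_edge:
  assumes "distinct xs" "hd xs \<in> A" "\<not> set xs \<subseteq> A" "a \<in> A" "b \<notin> A"
    and cut: "\<forall>e\<in>path_edges xs. e \<subseteq> A \<or> e \<inter> A = {} \<or> e = {a, b}"
  obtains ys zs where "xs = ys @ zs" "ys \<noteq> []" "zs \<noteq> []" "set ys \<subseteq> A" "set zs \<inter> A = {}"
    "last ys = a" "hd zs = b"
proof -
  define ys where "ys = takeWhile (\<lambda>v. v \<in> A) xs"
  define zs where "zs = dropWhile (\<lambda>v. v \<in> A) xs"
  have xs: "xs = ys @ zs" by (simp add: ys_def zs_def)
  have ys_zs: "ys \<noteq> []" "zs \<noteq> []" "set ys \<subseteq> A" "hd zs \<notin> A"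
    using assms(2,3) hd_dropWhile[of "\<lambda>v. v \<in> A" xs]
    by (auto simp: ys_def zs_def takeWhile_eq_Nil_iff dropWhile_eq_Nil_conv dest: set_takeWhileD)
  have pe: "path_edges xs = insert {last ys, hd zs} (path_edges ys \<union> path_edges zs)"
    using path_edges_append[OF ys_zs(1,2)] xs by simp
  have "last ys \<in> A"
    using ys_zs by auto
  moreover have "{last ys, hd zs} \<in> path_edges xs"
    using pe by simp
  ultimately have "{last ys, hd zs} = {a, b}"
    using cut ys_zs(4) by fastforce
  then have ab: "last ys = a" "hd zs = b"
    using ys_zs assms(4,5) by (auto simp: doubleton_eq_iff)
  have "a \<notin> set zs"
    using assms(1) xs ab ys_zs(1) by (metis disjoint_iff distinct_append last_in_set)
  have "e \<subseteq> A \<or> e \<inter> A = {}" if e: "e \<in> path_edges zs" for e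
  proof -
    have "e \<noteq> {a, b}"
      using path_edge_subset[OF e] \<open>a \<notin> set zs\<close> by blast
    then show ?thesis
      using cut pe e by blast
  qed
  then have "set zs \<inter> A = {}"
    using path_never_enters ys_zs(4) by metis
  with that xs ys_zs ab show ?thesis by blast
qed

lemma path_stays_behind_cut_edge:
  assumes "distinct xs" "hd xs \<in> A" "last xs \<in> A" "a \<in> A" "b \<notin> A"
    and "\<forall>e\<in>path_edges xs. e \<subseteq> A \<or> e \<inter> A = {} \<or> e = {a, b}"
  shows "set xs \<subseteq> A"
proof (rule ccontr)
  assume "\<not> set xs \<subseteq> A"
  then obtain ys zs where "xs = ys @ zs" "zs \<noteq> []" "set zs \<inter> A = {}"
    by (rule path_split_at_cut_edge[OF assms(1,2) _ assms(4-6)])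
  then have "last xs \<in> set zs"
    by simp
  with \<open>set zs \<inter> A = {}\<close> assms(3) show False
    by blast
qed

lemma is_path_pendant_Cons:
  assumes "s \<notin> W" "is_path W F zs" "hd zs = y"
  shows "is_path (W \<union> {s}) (F \<union> {{y, s}}) (s # zs)"
  using assms by (auto simp: is_path_iff path_edges_Cons insert_commute)

lemma is_path_pendantE:
  assumes "is_path (W \<union> {s}) (F \<union> {{y, s}}) xs" "hd xs = s" "last xs \<noteq> s"
    and "s \<notin> W" "\<forall>e\<in>F. e \<subseteq> W"
  obtains zs where "xs = s # zs" "is_path W F zs" "hd zs = y"
proof -
  obtain zs where xs: "xs = s # zs"
    using assms(1,2) by (cases xs) (auto simp: is_path_def)
  with assms(3) have "zs \<noteq> []"
    by auto
  have "s \<notin> set zs" "set zs \<subseteq> W \<union> {s}"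
    using assms(1) xs by (auto simp: is_path_def)
  then have "set zs \<subseteq> W" by blast
  have edges: "insert {s, hd zs} (path_edges zs) \<subseteq> F \<union> {{y, s}}"
    using assms(1) xs \<open>zs \<noteq> []\<close> by (simp add: is_path_iff path_edges_Cons)
  have "{s, hd zs} \<notin> F"
    using assms(4,5) by blast
  then have "hd zs = y"
    using edges \<open>zs \<noteq> []\<close> \<open>s \<notin> set zs\<close> by (auto simp: doubleton_eq_iff)
  have "path_edges zs \<subseteq> F"
    using edges path_edge_subset \<open>s \<notin> set zs\<close> by blast
  then have "is_path W F zs"
    using assms(1) xs \<open>zs \<noteq> []\<close> \<open>set zs \<subseteq> W\<close> by (simp add: is_path_iff)
  then show ?thesis
    using that xs \<open>hd zs = y\<close> by simp
qed

lemma is_path_avoiding_pendant: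
  assumes "is_path (W \<union> {s}) (F \<union> {{y, s}}) xs" "{y, s} \<notin> path_edges xs" "hd xs \<noteq> s"
    and "s \<notin> W" "\<forall>e\<in>F. e \<subseteq> W"
  shows "is_path W F xs"
proof -
  have edges: "path_edges xs \<subseteq> F"
    using assms(1,2) by (auto simp: is_path_iff)
  then have "set xs \<inter> {s} = {}"
    using assms(3-5) by (intro path_never_enters) auto
  then show ?thesis
    using assms(1) edges by (auto simp: is_path_iff)
qed

definition routing :: "'a set \<Rightarrow> 'a set set \<Rightarrow> 'a set set \<Rightarrow> ('a set \<Rightarrow> 'a list) \<Rightarrow> bool" where
  "routing V E P f \<longleftrightarrow>
     (\<forall>p\<in>P. is_path V E (f p) \<and> {hd (f p), last (f p)} = p) \<and>
     (\<forall>p\<in>P. \<forall>q\<in>P. p \<noteq> q \<longrightarrow> path_edges (f p) \<inter> path_edges (f q) = {})"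

lemma edp_iff_routing: "edp V E P \<longleftrightarrow> (\<exists>f. routing V E P f)"
  by (simp add: edp_def routing_def)

lemma routingD:
  assumes "routing V E P f" "p \<in> P"
  shows "is_path V E (f p)" "{hd (f p), last (f p)} = p"
    and "q \<in> P \<Longrightarrow> p \<noteq> q \<Longrightarrow> path_edges (f p) \<inter> path_edges (f q) = {}"
  using assms by (auto simp: routing_def)

lemma routing_subset:
  assumes "routing V E P f" "Q \<subseteq> P" "\<forall>p\<in>Q. is_path V' E' (f p)"
  shows "routing V' E' Q f"
proof -
  have "p \<in> P" if "p \<in> Q" for p
    using assms(2) that by blast
  then show ?thesis
    using assms(3) routingD[OF assms(1)] unfolding routing_def by simp
qed

lemma routing_mono: "routing V E P f \<Longrightarrow> V \<subseteq> V' \<Longrightarrow> E \<subseteq> E' \<Longrightarrow> routing V' E' P f"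
  by (auto simp: routing_def intro: is_path_mono)

lemma routing_union:
  assumes "routing V E P f" "routing V E Q g"
    and "\<forall>p\<in>P. \<forall>q\<in>Q. path_edges (f p) \<inter> path_edges (g q) = {}"
  shows "routing V E (P \<union> Q) (\<lambda>p. if p \<in> Q then g p else f p)"
  unfolding routing_def
proof (intro conjI ballI impI)
  fix p q assume pq: "p \<in> P \<union> Q" "q \<in> P \<union> Q" "p \<noteq> q"
  show "path_edges (if p \<in> Q then g p else f p) \<inter> path_edges (if q \<in> Q then g q else f q) = {}"
  proof (cases "p \<in> Q"; cases "q \<in> Q")
    assume "p \<in> Q" "q \<notin> Q"
    then show ?thesis using assms(3) pq by (simp add: Int_commute)
  next
    assume "p \<notin> Q" "q \<in> Q"
    then show ?thesis using assms(3) pq by simp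
  qed (use pq routingD(3)[OF assms(1)] routingD(3)[OF assms(2)] in auto)
qed (use routingD[OF assms(1)] routingD[OF assms(2)] in auto)

lemma routing_insert:
  assumes "routing V E Q f" "is_path V E xs" "{hd xs, last xs} = p"
    and "\<forall>q\<in>Q - {p}. path_edges xs \<inter> path_edges (f q) = {}"
  shows "routing V E (insert p Q) (f(p := xs))"
  using assms routingD[OF assms(1)] unfolding routing_def by (auto simp: Int_commute)

lemma component_subset: "is_component W F C \<Longrightarrow> C \<subseteq> W"
  unfolding is_component_def by (force simp: is_path_def)

lemma component_closed:
  assumes "is_component W F C" "u \<in> C" "{u, v} \<in> F" "v \<in> W"
  shows "v \<in> C"
proof -
  obtain c where C: "C = {v. \<exists>xs. is_path W F xs \<and> hd xs = c \<and> last xs = v}"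
    using assms(1) unfolding is_component_def by blast
  obtain xs where xs: "is_path W F xs" "hd xs = c" "last xs = u"
    using assms(2) C by blast
  have "xs \<noteq> []"
    using xs(1) by (simp add: is_path_def)
  show ?thesis
  proof (cases "v \<in> set xs")
    case True
    then obtain as bs where "xs = as @ v # bs"
      by (metis split_list)
    with xs have "is_path W F (as @ [v])" "hd (as @ [v]) = c"
      using is_path_append[of "as @ [v]" bs] by (auto simp: hd_append split: if_splits)
    then show ?thesis
      using C by force
  next
    case False
    have "is_path W F [v]"
      using assms(4) by (simp add: is_path_def)
    with False have "is_path W F (xs @ [v])"
      using xs \<open>xs \<noteq> []\<close> assms(3) is_path_append[of xs "[v]"] by simp
    then show ?thesis
      using C xs(2) \<open>xs \<noteq> []\<close> by force
  qed
qed

locale bridge =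
  fixes V :: "'a set" and E :: "'a set set" and C :: "'a set" and l y :: 'a
  assumes no_empty_edge: "{} \<notin> E"
    and C_subset: "C \<subseteq> V" and l_in_C: "l \<in> C" and y_notin_C: "y \<notin> C"
    and bridge_edge: "{l, y} \<in> E"
    and only_bridge_crosses: "\<forall>e\<in>E. e \<subseteq> C \<or> e \<inter> C = {} \<or> e = {l, y}"
begin

lemma inner_outer_edges_disjoint: "induced_edges E C \<inter> induced_edges E (V - C) = {}"
proof -
  have "e = {}" if "e \<subseteq> C" "e \<subseteq> V - C" for e :: "'a set"
    using that by blast
  then show ?thesis
    using no_empty_edge unfolding induced_edges_def by blast
qed

lemma bridge_edge_not_inner: "{l, y} \<notin> induced_edges E C"
  and bridge_edge_not_outer: "{l, y} \<notin> induced_edges E (V - C)"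
  using l_in_C y_notin_C unfolding induced_edges_def by auto

lemma path_cut_edges: "is_path V E xs \<Longrightarrow> \<forall>e\<in>path_edges xs. e \<subseteq> C \<or> e \<inter> C = {} \<or> e = {l, y}"
  using only_bridge_crosses by (auto simp: is_path_iff)

lemma path_inside:
  assumes "is_path V E xs" "hd xs \<in> C" "last xs \<in> C"
  shows "is_path C (induced_edges E C) xs"
proof -
  have "set xs \<subseteq> C"
    using assms(1) path_stays_behind_cut_edge[OF _ assms(2,3) l_in_C y_notin_C path_cut_edges[OF assms(1)]]
    by (simp add: is_path_def)
  then show ?thesis
    using is_path_induced[OF assms(1)] by blast
qed

lemma path_outside:
  assumes "is_path V E xs" "hd xs \<notin> C" "last xs \<notin> C"
  shows "is_path (V - C) (induced_edges E (V - C)) xs"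
proof -
  have "\<forall>e\<in>path_edges xs. e \<subseteq> - C \<or> e \<inter> - C = {} \<or> e = {y, l}"
    using path_cut_edges[OF assms(1)] by (auto simp: insert_commute)
  then have "set xs \<subseteq> - C"
    using assms(1-3) path_stays_behind_cut_edge[of xs "- C" y l] l_in_C y_notin_C
    by (simp add: is_path_def)
  moreover have "set xs \<subseteq> V"
    using assms(1) by (simp add: is_path_def)
  ultimately show ?thesis
    using is_path_induced[OF assms(1), of "V - C"] by blast
qed

lemma path_leaving:
  assumes "is_path V E xs" "hd xs \<in> C" "last xs \<notin> C"
  obtains ys zs where "xs = ys @ zs" "is_path C (induced_edges E C) ys"
    "is_path (V - C) (induced_edges E (V - C)) zs" "last ys = l" "hd zs = y"
    "path_edges xs = insert {l, y} (path_edges ys \<union> path_edges zs)"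
proof -
  have "distinct xs" "\<not> set xs \<subseteq> C"
    using assms(1,3) last_in_set by (fastforce simp: is_path_def)+
  then obtain ys zs where yz: "xs = ys @ zs" "ys \<noteq> []" "zs \<noteq> []" "set ys \<subseteq> C"
      "set zs \<inter> C = {}" "last ys = l" "hd zs = y"
    by (rule path_split_at_cut_edge[OF _ assms(2) _ l_in_C y_notin_C path_cut_edges[OF assms(1)]])
  have ys: "is_path V E ys" and zs: "is_path V E zs"
    using assms(1) is_path_append[OF yz(2,3)] yz(1) by simp_all
  have "set zs \<subseteq> V - C"
    using zs yz(5) by (auto simp: is_path_def)
  moreover have "path_edges xs = insert {l, y} (path_edges ys \<union> path_edges zs)"
    using path_edges_append[OF yz(2,3)] yz(1,6,7) by simp
  ultimately show ?thesis
    using that yz(1,6,7) is_path_induced[OF ys yz(4)] is_path_induced[OF zs] by blast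
qed

lemma path_join:
  assumes "is_path C (induced_edges E C) ys" "is_path (V - C) (induced_edges E (V - C)) zs"
    and "last ys = l" "hd zs = y"
  shows "is_path V E (ys @ zs)"
proof -
  have "is_path V E ys" "is_path V E zs"
    using assms(1,2) C_subset is_path_mono induced_edges_subset by blast+
  moreover have "set ys \<inter> set zs = {}"
    using assms(1,2) by (auto simp: is_path_def)
  moreover have "ys \<noteq> []" "zs \<noteq> []"
    using assms(1,2) by (auto simp: is_path_def)
  ultimately show ?thesis
    using is_path_append[of ys zs] bridge_edge assms(3,4) by simp
qed

lemma routing_inner:
  assumes "routing V E P f"
  shows "routing C (induced_edges E C) (inner_pairs P C) f"
proof (rule routing_subset[OF assms])
  show "inner_pairs P C \<subseteq> P"
    by (auto simp: inner_pairs_def)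
  show "\<forall>p\<in>inner_pairs P C. is_path C (induced_edges E C) (f p)"
  proof
    fix p assume "p \<in> inner_pairs P C"
    then have "p \<in> P" "p \<subseteq> C"
      by (auto simp: inner_pairs_def)
    then show "is_path C (induced_edges E C) (f p)"
      using path_inside routingD(1,2)[OF assms] by (metis insert_subset)
  qed
qed

lemma routing_outer:
  assumes "routing V E P f" "Q \<subseteq> P" "\<forall>p\<in>Q. p \<inter> C = {}"
  shows "routing (V - C) (induced_edges E (V - C)) Q f"
proof (rule routing_subset[OF assms(1,2)])
  show "\<forall>p\<in>Q. is_path (V - C) (induced_edges E (V - C)) (f p)"
  proof
    fix p assume "p \<in> Q"
    then have "p \<in> P" "p \<inter> C = {}"
      using assms(2,3) by auto
    then show "is_path (V - C) (induced_edges E (V - C)) (f p)"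
      using path_outside routingD(1,2)[OF assms(1)] by (metis disjoint_iff insertCI)
  qed
qed

lemma routing_leaving_pair:
  assumes "routing V E P f" "{s, t} \<in> P" "s \<in> C" "t \<notin> C"
  obtains ys zs where "is_path C (induced_edges E C) ys" "is_path (V - C) (induced_edges E (V - C)) zs"
    "hd ys = s" "last ys = l" "hd zs = y" "last zs = t"
    "path_edges (f {s, t}) = insert {l, y} (path_edges ys \<union> path_edges zs)"
proof -
  obtain xs where xs: "is_path V E xs" "hd xs = s" "last xs = t" "path_edges xs = path_edges (f {s, t})"
    by (rule obtain_oriented_path[OF routingD(1,2)[OF assms(1,2)]])
  obtain ys zs where yz: "xs = ys @ zs" "is_path C (induced_edges E C) ys"
      "is_path (V - C) (induced_edges E (V - C)) zs" "last ys = l" "hd zs = y"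
      "path_edges xs = insert {l, y} (path_edges ys \<union> path_edges zs)"
    using path_leaving[OF xs(1)] xs(2,3) assms(3,4) by blast
  have "ys \<noteq> []" "zs \<noteq> []"
    using yz(2,3) by (auto simp: is_path_def)
  then have "hd ys = s" "last zs = t"
    using xs(2,3) yz(1) by simp_all
  then show ?thesis
    using that yz(2-6) xs(4) by simp
qed

lemma routing_glue:
  assumes "routing C (induced_edges E C) Q f" "routing (V - C) (induced_edges E (V - C)) R g"
  shows "routing V E (Q \<union> R) (\<lambda>p. if p \<in> R then g p else f p)"
proof (rule routing_union)
  show "routing V E Q f" "routing V E R g"
    using routing_mono assms C_subset induced_edges_subset by blast+
  show "\<forall>p\<in>Q. \<forall>q\<in>R. path_edges (f p) \<inter> path_edges (g q) = {}"
    using routingD(1)[OF assms(1)] routingD(1)[OF assms(2)] inner_outer_edges_disjoint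
    by (fastforce simp: is_path_iff)
qed

lemma routing_glue_crossing:
  assumes f: "routing C (induced_edges E C) Q f" and g: "routing (V - C) (induced_edges E (V - C)) R g"
    and ys: "is_path C (induced_edges E C) ys" "last ys = l"
    and zs: "is_path (V - C) (induced_edges E (V - C)) zs" "hd zs = y"
    and ys_f: "\<forall>p\<in>Q. path_edges ys \<inter> path_edges (f p) = {}"
    and zs_g: "\<forall>p\<in>R. path_edges zs \<inter> path_edges (g p) = {}"
  shows "routing V E (insert {hd ys, last zs} (Q \<union> R))
    ((\<lambda>p. if p \<in> R then g p else f p)({hd ys, last zs} := ys @ zs))"
proof -
  define h where "h = (\<lambda>p. if p \<in> R then g p else f p)"
  have ys_zs_nonempty: "ys \<noteq> []" "zs \<noteq> []"
    using ys(1) zs(1) by (auto simp: is_path_def)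
  have edges: "path_edges (ys @ zs) = insert {l, y} (path_edges ys \<union> path_edges zs)"
    using path_edges_append[OF ys_zs_nonempty] ys(2) zs(2) by simp
  have "path_edges (ys @ zs) \<inter> path_edges (h q) = {}" if "q \<in> Q \<union> R" for q
  proof (cases "q \<in> R")
    case True
    then have "path_edges (h q) \<subseteq> induced_edges E (V - C)"
      using path_edges_induced[OF routingD(1)[OF g True]] by (simp add: h_def)
    then show ?thesis
      using edges zs_g True path_edges_induced[OF ys(1)] inner_outer_edges_disjoint
        bridge_edge_not_outer by (auto simp: h_def)
  next
    case False
    with that have "q \<in> Q"
      by simp
    then have "path_edges (h q) \<subseteq> induced_edges E C"
      using path_edges_induced[OF routingD(1)[OF f \<open>q \<in> Q\<close>]] False by (simp add: h_def)
    then show ?thesis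
      using edges ys_f \<open>q \<in> Q\<close> False path_edges_induced[OF zs(1)] inner_outer_edges_disjoint
        bridge_edge_not_inner by (auto simp: h_def)
  qed
  then show ?thesis
    using routing_glue[OF f g] ys_zs_nonempty
    by (intro routing_insert path_join ys zs) (auto simp: h_def)
qed

lemma edp_inner: "edp V E P \<Longrightarrow> edp C (induced_edges E C) (inner_pairs P C)"
  using routing_inner by (auto simp: edp_iff_routing)

lemma edp_glue:
  assumes "edp C (induced_edges E C) (inner_pairs P C)"
    and "edp (V - C) (induced_edges E (V - C)) (P - inner_pairs P C)"
  shows "edp V E P"
proof -
  have "inner_pairs P C \<union> (P - inner_pairs P C) = P"
    by (auto simp: inner_pairs_def)
  then show ?thesis
    using assms routing_glue by (metis edp_iff_routing)
qed

end

locale bridge_instance = bridge V E C l y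
  for V :: "'a set" and E C l y +
  fixes P :: "'a set set"
  assumes pairs_doubleton: "\<forall>p\<in>P. \<exists>u v. u \<noteq> v \<and> p = {u, v}"
    and pairs_disjoint: "\<forall>p\<in>P. \<forall>q\<in>P. p \<noteq> q \<longrightarrow> p \<inter> q = {}"
begin

lemma crossing_pair:
  assumes "p \<in> P" "p \<notin> inner_pairs P C" "p \<inter> C \<noteq> {}"
  obtains s t where "p = {s, t}" "s \<in> unmatched P C" "t \<notin> C"
proof -
  obtain u v where p: "p = {u, v}"
    using pairs_doubleton assms(1) by blast
  with assms have "u \<in> C \<and> v \<notin> C \<or> v \<in> C \<and> u \<notin> C"
    by (auto simp: inner_pairs_def)
  then show ?thesis
  proof
    assume "u \<in> C \<and> v \<notin> C"
    then show ?thesis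
      using that[of u v] assms(1) p by (auto simp: unmatched_def)
  next
    assume "v \<in> C \<and> u \<notin> C"
    then show ?thesis
      using that[of v u] assms(1) p by (auto simp: unmatched_def insert_commute)
  qed
qed

lemma outer_pairs_avoid_if_no_unmatched:
  "unmatched P C = {} \<Longrightarrow> p \<in> P - inner_pairs P C \<Longrightarrow> p \<inter> C = {}"
  using crossing_pair by blast

lemma unmatched_singletonE:
  assumes "unmatched P C = {s}"
  obtains t where "{s, t} \<in> P" "s \<in> C" "t \<notin> C"
    and "\<And>p. p \<in> P \<Longrightarrow> p \<noteq> {s, t} \<Longrightarrow> s \<notin> p"
    and "\<And>p. p \<in> P - inner_pairs P C \<Longrightarrow> p \<noteq> {s, t} \<Longrightarrow> p \<inter> C = {}"
proof -
  obtain t where st: "{s, t} \<in> P" "s \<in> C" "t \<notin> C"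
    using assms unfolding unmatched_def by blast
  have others: "s \<notin> p" if "p \<in> P" "p \<noteq> {s, t}" for p
  proof -
    have "p \<inter> {s, t} = {}"
      using pairs_disjoint that st(1) by simp
    then show ?thesis
      by blast
  qed
  have "p \<inter> C = {}" if "p \<in> P - inner_pairs P C" "p \<noteq> {s, t}" for p
  proof (rule ccontr)
    assume "p \<inter> C \<noteq> {}"
    moreover have "p \<in> P" "p \<notin> inner_pairs P C"
      using that(1) by simp_all
    ultimately obtain s' t' where "p = {s', t'}" "s' \<in> unmatched P C"
      using crossing_pair by metis
    then have "s \<in> p"
      using assms by simp
    with others that show False
      by blast
  qed
  with st others show ?thesis
    by (rule that)
qed

lemma not_edp_if_two_unmatched:
  assumes "a \<in> unmatched P C" "b \<in> unmatched P C" "a \<noteq> b"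
  shows "\<not> edp V E P"
proof
  assume "edp V E P"
  then obtain f where f: "routing V E P f"
    by (auto simp: edp_iff_routing)
  obtain ta tb where a: "{a, ta} \<in> P" "a \<in> C" "ta \<notin> C" and b: "{b, tb} \<in> P" "b \<in> C" "tb \<notin> C"
    using assms(1,2) unfolding unmatched_def by blast
  have "{l, y} \<in> path_edges (f {a, ta})"
    by (rule routing_leaving_pair[OF f a]) simp
  moreover have "{l, y} \<in> path_edges (f {b, tb})"
    by (rule routing_leaving_pair[OF f b]) simp
  moreover have "{a, ta} \<noteq> {b, tb}"
    using a b assms(3) by (auto simp: doubleton_eq_iff)
  ultimately show False
    using routingD(3)[OF f a(1) b(1)] by blast
qed

lemma edp_outer_if_no_unmatched:
  assumes "unmatched P C = {}" "edp V E P"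
  shows "edp (V - C) (induced_edges E (V - C)) (P - inner_pairs P C)"
  using assms routing_outer[of P _ "P - inner_pairs P C"] outer_pairs_avoid_if_no_unmatched
  by (auto simp: edp_iff_routing)

lemma edp_inner_with_exit:
  assumes "unmatched P C = {s}" "edp V E P"
  shows "edp C (induced_edges E C) (inner_pairs P C \<union> (if s = l then {} else {{s, l}}))"
proof (cases "s = l")
  case True
  then show ?thesis
    using edp_inner[OF assms(2)] by simp
next
  case False
  obtain f where f: "routing V E P f"
    using assms(2) by (auto simp: edp_iff_routing)
  obtain t where st: "{s, t} \<in> P" "s \<in> C" "t \<notin> C"
    by (rule unmatched_singletonE[OF assms(1)])
  obtain ys zs where ys: "is_path C (induced_edges E C) ys" "hd ys = s" "last ys = l"
    and ys_edges: "path_edges ys \<subseteq> path_edges (f {s, t})"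
    by (rule routing_leaving_pair[OF f st]) auto
  have "path_edges ys \<inter> path_edges (f q) = {}" if "q \<in> inner_pairs P C" for q
  proof -
    have "q \<in> P" "q \<noteq> {s, t}"
      using that st(3) by (auto simp: inner_pairs_def)
    then show ?thesis
      using routingD(3)[OF f st(1)] ys_edges by blast
  qed
  then have "routing C (induced_edges E C) (insert {s, l} (inner_pairs P C)) (f({s, l} := ys))"
    using routing_insert[OF routing_inner[OF f] ys(1)] ys(2,3) by simp
  then show ?thesis
    using False by (auto simp: edp_iff_routing)
qed

lemma edp_contracted:
  assumes "unmatched P C = {s}" "edp V E P"
  shows "edp ((V - C) \<union> {s}) (induced_edges E (V - C) \<union> {{y, s}}) (P - inner_pairs P C)"
proof -
  obtain f where f: "routing V E P f"
    using assms(2) by (auto simp: edp_iff_routing)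
  obtain t where st: "{s, t} \<in> P" "s \<in> C" "t \<notin> C"
    and others: "\<And>p. p \<in> P - inner_pairs P C \<Longrightarrow> p \<noteq> {s, t} \<Longrightarrow> p \<inter> C = {}"
    by (rule unmatched_singletonE[OF assms(1)]) blast
  obtain zs where zs: "is_path (V - C) (induced_edges E (V - C)) zs" "hd zs = y" "last zs = t"
    and zs_edges: "path_edges zs \<subseteq> path_edges (f {s, t})"
    by (rule routing_leaving_pair[OF f st]) auto
  define Q where "Q = P - inner_pairs P C - {{s, t}}"
  have "Q \<subseteq> P" "\<forall>p\<in>Q. p \<inter> C = {}"
    using others unfolding Q_def by auto
  then have Q: "routing (V - C) (induced_edges E (V - C)) Q f"
    by (rule routing_outer[OF f])
  have "path_edges (s # zs) \<inter> path_edges (f q) = {}" if "q \<in> Q" for q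
  proof -
    have "path_edges (f q) \<subseteq> induced_edges E (V - C)"
      using routingD(1)[OF Q that] by (simp add: is_path_iff)
    moreover have "{s, y} \<notin> induced_edges E (V - C)"
      using st(2) by (auto simp: induced_edges_def)
    moreover have "path_edges zs \<inter> path_edges (f q) = {}"
      using routingD(3)[OF f st(1), of q] that zs_edges unfolding Q_def by blast
    ultimately show ?thesis
      using zs(1,2) by (auto simp: path_edges_Cons is_path_def)
  qed
  moreover have "is_path ((V - C) \<union> {s}) (induced_edges E (V - C) \<union> {{y, s}}) (s # zs)"
    using st(2) by (intro is_path_pendant_Cons zs(1,2)) simp
  moreover have "{hd (s # zs), last (s # zs)} = {s, t}"
    using zs(1,3) by (auto simp: is_path_def)
  ultimately have "routing ((V - C) \<union> {s}) (induced_edges E (V - C) \<union> {{y, s}})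
      (insert {s, t} Q) (f({s, t} := s # zs))"
    by (intro routing_insert routing_mono[OF Q]) auto
  moreover have "insert {s, t} Q = P - inner_pairs P C"
    using st unfolding Q_def inner_pairs_def by auto
  ultimately show ?thesis
    by (auto simp: edp_iff_routing)
qed

lemma inner_routing_with_exit_path:
  assumes "unmatched P C = {s}"
    and "edp C (induced_edges E C) (inner_pairs P C \<union> (if s = l then {} else {{s, l}}))"
  obtains f ys where "routing C (induced_edges E C) (inner_pairs P C) f"
    "is_path C (induced_edges E C) ys" "hd ys = s" "last ys = l"
    "\<forall>p\<in>inner_pairs P C. path_edges ys \<inter> path_edges (f p) = {}"
proof -
  obtain f where f: "routing C (induced_edges E C) (inner_pairs P C \<union> (if s = l then {} else {{s, l}})) f"
    using assms(2) by (auto simp: edp_iff_routing)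
  then have inner: "routing C (induced_edges E C) (inner_pairs P C) f"
    by (rule routing_subset) (use routingD(1)[OF f] in auto)
  obtain t where st: "{s, t} \<in> P" "s \<in> C" "t \<notin> C"
    and others: "\<And>p. p \<in> P \<Longrightarrow> p \<noteq> {s, t} \<Longrightarrow> s \<notin> p"
    by (rule unmatched_singletonE[OF assms(1)]) blast
  show ?thesis
  proof (cases "s = l")
    case True
    have "is_path C (induced_edges E C) [s]"
      using st(2) by (simp add: is_path_def)
    with that[OF inner] True show ?thesis
      by simp
  next
    case False
    have sl: "{s, l} \<in> inner_pairs P C \<union> (if s = l then {} else {{s, l}})"
      "{s, l} \<notin> inner_pairs P C"
      using others[of "{s, l}"] st l_in_C False by (auto simp: inner_pairs_def doubleton_eq_iff)
    obtain ys where "is_path C (induced_edges E C) ys" "hd ys = s" "last ys = l"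
        "path_edges ys = path_edges (f {s, l})"
      by (rule obtain_oriented_path[OF routingD(1,2)[OF f sl(1)]])
    moreover have "path_edges (f {s, l}) \<inter> path_edges (f p) = {}" if "p \<in> inner_pairs P C" for p
    proof -
      have "p \<in> inner_pairs P C \<union> (if s = l then {} else {{s, l}})" "{s, l} \<noteq> p"
        using that sl(2) by auto
      then show ?thesis
        by (rule routingD(3)[OF f sl(1)])
    qed
    ultimately show ?thesis
      using that[OF inner] by simp
  qed
qed

lemma outer_routing_with_exit_path:
  assumes "{s, t} \<in> P" "s \<in> C" "t \<notin> C" "\<And>p. p \<in> P \<Longrightarrow> p \<noteq> {s, t} \<Longrightarrow> s \<notin> p"
    and "edp ((V - C) \<union> {s}) (induced_edges E (V - C) \<union> {{y, s}}) (P - inner_pairs P C)"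
  obtains g zs where "routing (V - C) (induced_edges E (V - C)) (P - inner_pairs P C - {{s, t}}) g"
    "is_path (V - C) (induced_edges E (V - C)) zs" "hd zs = y" "last zs = t"
    "\<forall>p\<in>P - inner_pairs P C - {{s, t}}. path_edges zs \<inter> path_edges (g p) = {}"
proof -
  obtain g where g: "routing ((V - C) \<union> {s}) (induced_edges E (V - C) \<union> {{y, s}}) (P - inner_pairs P C) g"
    using assms(5) by (auto simp: edp_iff_routing)
  have st: "{s, t} \<in> P - inner_pairs P C"
    using assms(1,3) by (auto simp: inner_pairs_def)
  obtain xs where xs: "is_path ((V - C) \<union> {s}) (induced_edges E (V - C) \<union> {{y, s}}) xs"
      "hd xs = s" "last xs = t" "path_edges xs = path_edges (g {s, t})"
    by (rule obtain_oriented_path[OF routingD(1,2)[OF g st]])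
  have outer_edges: "\<forall>e\<in>induced_edges E (V - C). e \<subseteq> V - C"
    by (simp add: induced_edges_def)
  obtain zs where zs: "xs = s # zs" "is_path (V - C) (induced_edges E (V - C)) zs" "hd zs = y"
    using is_path_pendantE[OF xs(1,2) _ _ outer_edges] xs(3) assms(2,3) by blast
  have g_st: "path_edges (g {s, t}) = insert {y, s} (path_edges zs)"
    using xs(4) zs by (auto simp: path_edges_Cons is_path_def insert_commute)
  have "is_path (V - C) (induced_edges E (V - C)) (g p)" if p: "p \<in> P - inner_pairs P C - {{s, t}}" for p
  proof (rule is_path_avoiding_pendant[OF routingD(1)[OF g] _ _ _ outer_edges])
    show "{y, s} \<notin> path_edges (g p)"
      using routingD(3)[OF g st, of p] p g_st by blast
    show "hd (g p) \<noteq> s"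
      using routingD(2)[OF g, of p] assms(4)[of p] p by auto
  qed (use p assms(2) in auto)
  then have "routing (V - C) (induced_edges E (V - C)) (P - inner_pairs P C - {{s, t}}) g"
    by (intro routing_subset[OF g]) auto
  moreover have "\<forall>p\<in>P - inner_pairs P C - {{s, t}}. path_edges zs \<inter> path_edges (g p) = {}"
    using routingD(3)[OF g st] g_st by blast
  moreover have "last zs = t"
    using xs(3) zs(1,2) by (auto simp: is_path_def)
  ultimately show ?thesis
    using that zs(2,3) by blast
qed

lemma edp_glue_with_exit:
  assumes "unmatched P C = {s}"
    and "edp C (induced_edges E C) (inner_pairs P C \<union> (if s = l then {} else {{s, l}}))"
    and "edp ((V - C) \<union> {s}) (induced_edges E (V - C) \<union> {{y, s}}) (P - inner_pairs P C)"
  shows "edp V E P"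
proof -
  obtain t where st: "{s, t} \<in> P" "s \<in> C" "t \<notin> C"
    and others: "\<And>p. p \<in> P \<Longrightarrow> p \<noteq> {s, t} \<Longrightarrow> s \<notin> p"
    by (rule unmatched_singletonE[OF assms(1)]) blast
  obtain f ys where f: "routing C (induced_edges E C) (inner_pairs P C) f"
    and ys: "is_path C (induced_edges E C) ys" "hd ys = s" "last ys = l"
    and ys_f: "\<forall>p\<in>inner_pairs P C. path_edges ys \<inter> path_edges (f p) = {}"
    by (rule inner_routing_with_exit_path[OF assms(1,2)])
  define Q where "Q = P - inner_pairs P C - {{s, t}}"
  obtain g zs where g: "routing (V - C) (induced_edges E (V - C)) Q g"
    and zs: "is_path (V - C) (induced_edges E (V - C)) zs" "hd zs = y" "last zs = t"
    and zs_g: "\<forall>p\<in>Q. path_edges zs \<inter> path_edges (g p) = {}"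
    unfolding Q_def by (rule outer_routing_with_exit_path[OF st others assms(3)])
  have "routing V E (insert {s, t} (inner_pairs P C \<union> Q))
      ((\<lambda>p. if p \<in> Q then g p else f p)({s, t} := ys @ zs))"
    using routing_glue_crossing[OF f g ys(1,3) zs(1,2) ys_f zs_g] ys(2) zs(3) by simp
  moreover have "insert {s, t} (inner_pairs P C \<union> Q) = P"
    using st unfolding Q_def inner_pairs_def by auto
  ultimately show ?thesis
    by (auto simp: edp_iff_routing)
qed

end

lemma bridge_instance_of_unique_exit:
  assumes G: "graph V E" and PP: "pairs_ok V P"
    and disj: "\<forall>p\<in>P. \<forall>q\<in>P. p \<noteq> q \<longrightarrow> p \<inter> q = {}"
    and comp: "is_component (V - Y) (induced_edges E (V - Y)) C"
    and lC: "l \<in> C" and yY: "y \<in> Y"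
    and unique_edge: "{e \<in> E. \<exists>a\<in>C. \<exists>b\<in>Y. e = {a, b}} = {{l, y}}"
  shows "bridge_instance V E C l y P"
proof -
  have CY: "C \<subseteq> V - Y"
    by (rule component_subset[OF comp])
  have leaves_to_bridge: "{u, v} = {l, y}" if "{u, v} \<in> E" "u \<in> C" "v \<notin> C" "v \<in> V" for u v
  proof (cases "v \<in> Y")
    case True
    then have "{u, v} \<in> {e \<in> E. \<exists>a\<in>C. \<exists>b\<in>Y. e = {a, b}}"
      using that(1,2) by blast
    then show ?thesis
      using unique_edge by simp
  next
    case False
    then have "{u, v} \<in> induced_edges E (V - Y)"
      using that CY unfolding induced_edges_def by auto
    then have "v \<in> C"
      using component_closed[OF comp that(2)] that(4) False by simp
    with that(3) show ?thesis
      by contradiction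
  qed
  have "\<forall>e\<in>E. e \<subseteq> C \<or> e \<inter> C = {} \<or> e = {l, y}"
  proof
    fix e assume "e \<in> E"
    then obtain u v where "e = {u, v}" "u \<in> V" "v \<in> V"
      using G unfolding graph_def by blast
    then show "e \<subseteq> C \<or> e \<inter> C = {} \<or> e = {l, y}"
      using leaves_to_bridge[of u v] leaves_to_bridge[of v u] \<open>e \<in> E\<close>
      by (cases "u \<in> C"; cases "v \<in> C") (auto simp: insert_commute)
  qed
  moreover have "{} \<notin> E"
    using G unfolding graph_def by blast
  moreover have "{l, y} \<in> E"
    using unique_edge by (metis (no_types, lifting) mem_Collect_eq singletonI)
  moreover have "y \<notin> C"
    using CY yY by blast
  moreover have "\<forall>p\<in>P. \<exists>u v. u \<noteq> v \<and> p = {u, v}"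
    using PP unfolding pairs_ok_def by blast
  ultimately show ?thesis
    using CY lC disj by unfold_locales blast+
qed

theorem mainTheorem8:
  fixes V :: "'a set" and E P X :: "'a set set" and C :: "'a set" and l y :: 'a
  assumes G: "graph V E"
    and PP: "pairs_ok V P"
    and disj: "\<forall>p\<in>P. \<forall>q\<in>P. p \<noteq> q \<longrightarrow> p \<inter> q = {}"
    and FES: "feedback_edge_set V E X"
    and Ydef: "Y = \<Union> X"
    and comp: "is_component (V - Y) (induced_edges E (V - Y)) C"
    and lC: "l \<in> C" and yY: "y \<in> Y"
    and unique_edge: "{e \<in> E. \<exists>a\<in>C. \<exists>b\<in>Y. e = {a, b}} = {{l, y}}"
  shows
    "(unmatched P C = {} \<and> edp C (induced_edges E C) (inner_pairs P C) \<longrightarrow>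
        (edp V E P \<longleftrightarrow> edp (V - C) (induced_edges E (V - C)) (P - inner_pairs P C)))
   \<and> (\<forall>s. unmatched P C = {s} \<and>
        edp C (induced_edges E C) (inner_pairs P C \<union> (if s = l then {} else {{s, l}})) \<longrightarrow>
        (edp V E P \<longleftrightarrow>
           edp ((V - C) \<union> {s}) (induced_edges E (V - C) \<union> {{y, s}}) (P - inner_pairs P C)))
   \<and> (((\<exists>a b. a \<in> unmatched P C \<and> b \<in> unmatched P C \<and> a \<noteq> b)
        \<or> (unmatched P C = {} \<and> \<not> edp C (induced_edges E C) (inner_pairs P C))
        \<or> (\<exists>s. unmatched P C = {s} \<and>
             \<not> edp C (induced_edges E C) (inner_pairs P C \<union> (if s = l then {} else {{s, l}}))))
       \<longrightarrow> \<not> edp V E P)"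
proof -
  interpret bridge_instance V E C l y P
    by (rule bridge_instance_of_unique_exit[OF G PP disj comp lC yY unique_edge])
  show ?thesis
  proof (intro conjI allI impI)
    assume "unmatched P C = {} \<and> edp C (induced_edges E C) (inner_pairs P C)"
    then show "edp V E P \<longleftrightarrow> edp (V - C) (induced_edges E (V - C)) (P - inner_pairs P C)"
      using edp_outer_if_no_unmatched edp_glue by blast
  next
    fix s
    assume "unmatched P C = {s} \<and>
      edp C (induced_edges E C) (inner_pairs P C \<union> (if s = l then {} else {{s, l}}))"
    then show "edp V E P \<longleftrightarrow>
        edp ((V - C) \<union> {s}) (induced_edges E (V - C) \<union> {{y, s}}) (P - inner_pairs P C)"
      using edp_contracted edp_glue_with_exit by blast
  next
    assume "(\<exists>a b. a \<in> unmatched P C \<and> b \<in> unmatched P C \<and> a \<noteq> b)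
      \<or> (unmatched P C = {} \<and> \<not> edp C (induced_edges E C) (inner_pairs P C))
      \<or> (\<exists>s. unmatched P C = {s} \<and>
           \<not> edp C (induced_edges E C) (inner_pairs P C \<union> (if s = l then {} else {{s, l}})))"
    then show "\<not> edp V E P"
      using not_edp_if_two_unmatched edp_inner edp_inner_with_exit by blast
  qed
qed

end
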